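(* Let $k=k(n)$ be integers with $1\le k=O(\log n)$ and let $h(n)=o(n/\log^2 n)$. For every $\eta>0$ there is $n_0$ such that for all $n\ge n_0$ and every $X\subseteq Q=\{0,1\}^n$ with $\mu(X)\ge\exp[-h(n)]$, if $x$ is chosen uniformly from $X$ then $$\Pr(T(x)\in X)<(1+\eta)\mu(X).$$
   Context: $Q=\{0,1\}^n$ with uniform probability measure $\mu$. For $x\in Q$, $T(x)$ is the random element of $Q$ obtained by choosing $K$ uniformly from the $k$-subsets of $[n]$, keeping $x_i$ for $i\in K$, and replacing each $x_i$ with $i\notin K$ by an independent uniform bit (independently of everything else, including the choice of $x$). *)

theory Defs
  imports "HOL-Probability.Probability" "HOL-Library.Landau_Symbols"
begin

text \<open>The cube Q = {0,1}^n, represented as bit vectors x :: nat => bool with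
  x i = False for i >= n (coordinates are 0..n-1).\<close>
definition cube :: "nat \<Rightarrow> (nat \<Rightarrow> bool) set" where
  "cube n = {x. \<forall>i\<ge>n. \<not> x i}"

definition mu :: "nat \<Rightarrow> (nat \<Rightarrow> bool) set \<Rightarrow> real" where
  "mu n X = real (card X) / 2 ^ n"

text \<open>T(x): choose K uniformly among k-subsets of [n], keep x_i for i in K,
  replace the other coordinates by independent uniform bits (realised as the
  coordinates of an independent uniform point y of the cube).\<close>
definition T :: "nat \<Rightarrow> nat \<Rightarrow> (nat \<Rightarrow> bool) \<Rightarrow> (nat \<Rightarrow> bool) pmf" where
  "T n k x = do {
     K \<leftarrow> pmf_of_set {K. K \<subseteq> {..<n} \<and> card K = k};
     y \<leftarrow> pmf_of_set (cube n);
     return_pmf (\<lambda>i. if i \<in> K then x i else y i)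
   }"

end

theory Submission
  imports Defs "HOL-Real_Asymp.Real_Asymp"
begin

text \<open>For \<open>K \<subseteq> [n]\<close> let \<open>S(K)\<close> be the number of ordered pairs of points of \<open>X\<close> that agree
  on \<open>K\<close>. Averaging over the fresh bits and over \<open>K\<close>, the probability in question is
  \<open>R\<^sub>k / (2\<^sup>n |X|)\<close>, where \<open>R\<^sub>j = 2\<^sup>j\<close> times the average of \<open>S\<close> over \<open>j\<close>-subsets; \<open>R\<^sub>0 = |X|\<^sup>2\<close>.
  Adding a coordinate \<open>i\<close> to \<open>K\<close>, \<open>2 S(K \<union> {i}) - S(K)\<close> is the sum over the cells \<open>C\<close> of the
  partition of \<open>X\<close> by the values on \<open>K\<close> of \<open>imbalance(C, i)\<^sup>2 / |C|\<close>. An entropy inequality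
  bounds the sum of these squares over the free coordinates of a cell by its entropy deficit, and
  Gibbs' inequality together with Cauchy--Schwarz turns the total deficit into
  \<open>L = -ln \<mu>(X)\<close>. This yields \<open>R\<^sub>j\<^sub>+\<^sub>1 \<le> R\<^sub>j (1 + 4 L / (n - j))\<close>, so the probability is at most
  \<open>\<mu>(X) exp (4 k L / (n - k + 1))\<close>, and \<open>L \<le> h(n) = o(n / log\<^sup>2 n)\<close>, \<open>k = O(log n)\<close> make the
  exponent vanish.\<close>

lemma quadratic_le_entropy_deficit:
  fixes v :: real assumes "\<bar>v\<bar> < 1"
  shows "v\<^sup>2 / 2 \<le> (1 + v) * ln (1 + v) + (1 - v) * ln (1 - v)"
proof -
  define F where "F t = (1 + t) * ln (1 + t) + (1 - t) * ln (1 - t) - t\<^sup>2 / 2" for t :: real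
  have F_mono: "F 0 \<le> F u" if u: "0 \<le> u" "u < 1" for u
  proof (rule DERIV_nonneg_imp_increasing_open[OF u(1)])
    fix t :: real assume t: "0 < t" "t < u"
    have "DERIV F t :> ln (1 + t) - ln (1 - t) - t"
      unfolding F_def using t u by (auto intro!: derivative_eq_intros)
    moreover have "ln (1 - t) \<le> - t" "0 \<le> ln (1 + t)"
      using ln_le_minus_one[of "1 - t"] t u by auto
    ultimately show "\<exists>y. DERIV F t :> y \<and> 0 \<le> y" by force
  next
    show "continuous_on {0..u} F" unfolding F_def using u by (auto intro!: continuous_intros)
  qed
  have "F (-v) = F v" unfolding F_def by (simp add: algebra_simps)
  hence "F 0 \<le> F v" using F_mono[of v] F_mono[of "-v"] assms by (cases "v \<ge> 0") auto
  thus ?thesis unfolding F_def by simp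
qed

text \<open>Writing \<open>s1 = s (1 + v) / 2\<close> and \<open>s0 = s (1 - v) / 2\<close> reduces this to the previous lemma.\<close>
lemma sq_diff_le_entropy_gain:
  fixes s0 s1 :: real assumes "0 < s0" "0 < s1"
  shows "(s1 - s0)\<^sup>2 \<le> 4 * (s0 + s1) *
           (s0 * ln s0 + s1 * ln s1 - (s0 + s1) * ln (s0 + s1) + (s0 + s1) * ln 2)"
proof -
  define s where "s = s0 + s1"
  define v where "v = (s1 - s0) / s"
  have s: "s > 0" using assms s_def by simp
  have v: "1 + v = 2 * s1 / s" "1 - v = 2 * s0 / s"
    using s unfolding v_def s_def by (auto simp: field_simps)
  have "\<bar>v\<bar> < 1" using assms unfolding v_def s_def by (auto simp: field_simps)
  hence "v\<^sup>2 / 2 \<le> (2 * s1 / s) * ln (2 * s1 / s) + (2 * s0 / s) * ln (2 * s0 / s)"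
    using quadratic_le_entropy_deficit v by metis
  also have "\<dots> = (2 / s) * (s1 * (ln 2 + ln s1 - ln s) + s0 * (ln 2 + ln s0 - ln s))"
    using assms s by (simp add: ln_div ln_mult field_simps)
  also have "\<dots> = (2 / s) * (s0 * ln s0 + s1 * ln s1 - s * ln s + s * ln 2)"
    unfolding s_def by (simp add: algebra_simps)
  finally have E: "v\<^sup>2 / 2 \<le> (2 / s) * (s0 * ln s0 + s1 * ln s1 - s * ln s + s * ln 2)" .
  have "(s1 - s0)\<^sup>2 = 2 * s\<^sup>2 * (v\<^sup>2 / 2)"
    using s unfolding v_def by (simp add: field_simps power2_eq_square)
  also have "\<dots> \<le> 2 * s\<^sup>2 * ((2 / s) * (s0 * ln s0 + s1 * ln s1 - s * ln s + s * ln 2))"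
    using E by (intro mult_left_mono) auto
  also have "\<dots> = 4 * s * (s0 * ln s0 + s1 * ln s1 - s * ln s + s * ln 2)"
    using s by (simp add: power2_eq_square)
  finally show ?thesis unfolding s_def .
qed

lemma sq_add_le_weighted:
  fixes a b s0 s1 :: real assumes "0 < s0" "0 < s1"
  shows "(a + b)\<^sup>2 \<le> ((s0 + s1) / s0) * a\<^sup>2 + ((s0 + s1) / s1) * b\<^sup>2"
proof -
  have "((s0 + s1) / s0) * a\<^sup>2 + ((s0 + s1) / s1) * b\<^sup>2 - (a + b)\<^sup>2 = (s1 * a - s0 * b)\<^sup>2 / (s0 * s1)"
    using assms by (simp add: field_simps power2_eq_square)
  moreover have "(s1 * a - s0 * b)\<^sup>2 / (s0 * s1) \<ge> 0" using assms by simp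
  ultimately show ?thesis by linarith
qed

lemma sum_mult_ln_ge:
  fixes c :: "'a \<Rightarrow> real"
  assumes "finite A" "A \<noteq> {}" "\<And>x. x \<in> A \<Longrightarrow> 0 < c x"
  shows "(\<Sum>x\<in>A. c x) * ln ((\<Sum>x\<in>A. c x) / real (card A)) \<le> (\<Sum>x\<in>A. c x * ln (c x))"
proof -
  define S where "S = (\<Sum>x\<in>A. c x)"
  define N where "N = real (card A)"
  have S: "S > 0" unfolding S_def using assms by (intro sum_pos) auto
  have N: "N > 0" unfolding N_def using assms by (simp add: card_gt_0_iff)
  have "(\<Sum>x\<in>A. c x * (ln (S / N) - ln (c x))) \<le> (\<Sum>x\<in>A. c x * (S / (N * c x) - 1))"
  proof (intro sum_mono mult_left_mono)
    fix x assume x: "x \<in> A"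
    have "ln (S / (N * c x)) \<le> S / (N * c x) - 1"
      using S N assms(3)[OF x] by (intro ln_le_minus_one) auto
    thus "ln (S / N) - ln (c x) \<le> S / (N * c x) - 1"
      using S N assms(3)[OF x] by (simp add: ln_div ln_mult)
  qed (use assms(3) in \<open>auto intro: less_imp_le\<close>)
  also have "\<dots> = (\<Sum>x\<in>A. S / N - c x)"
  proof (intro sum.cong refl)
    fix x assume "x \<in> A"
    hence "c x \<noteq> 0" using assms(3) by force
    thus "c x * (S / (N * c x) - 1) = S / N - c x" using N by (simp add: field_simps)
  qed
  also have "\<dots> = 0" using N unfolding S_def N_def by (simp add: sum_subtractf)
  finally have "(\<Sum>x\<in>A. c x * ln (S / N)) \<le> (\<Sum>x\<in>A. c x * ln (c x))"
    by (simp add: algebra_simps sum_subtractf)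
  moreover have "(\<Sum>x\<in>A. c x * ln (S / N)) = S * ln (S / N)"
    unfolding S_def by (simp add: sum_distrib_right)
  ultimately show ?thesis unfolding S_def N_def by simp
qed

definition spin :: "(nat \<Rightarrow> bool) \<Rightarrow> nat \<Rightarrow> real" where
  "spin x i = (if x i then 1 else -1)"

definition imbalance :: "(nat \<Rightarrow> bool) set \<Rightarrow> nat \<Rightarrow> real" where
  "imbalance C i = (\<Sum>x\<in>C. spin x i)"

definition agree_on :: "nat set \<Rightarrow> (nat \<Rightarrow> bool) \<Rightarrow> (nat \<Rightarrow> bool) \<Rightarrow> bool" where
  "agree_on K x z \<longleftrightarrow> (\<forall>i\<in>K. x i = z i)"

lemma imbalance_split:
  assumes "finite C"
  shows "imbalance C i = imbalance {x\<in>C. P x} i + imbalance {x\<in>C. \<not> P x} i"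
proof -
  have "C = {x\<in>C. P x} \<union> {x\<in>C. \<not> P x}" by blast
  thus ?thesis unfolding imbalance_def using assms by (metis (no_types, lifting) sum.union_disjoint
        finite_Un disjoint_iff mem_Collect_eq)
qed

lemma imbalance_eq_card_diff:
  assumes "finite C"
  shows "imbalance C i = real (card {x\<in>C. x i}) - real (card {x\<in>C. \<not> x i})"
  using imbalance_split[OF assms, of i "\<lambda>x. x i"] by (simp add: imbalance_def spin_def)

text \<open>The entropy form of the edge-isoperimetric inequality of the cube, for a set \<open>C\<close> lying in
  a subcube with free coordinates \<open>J\<close>.\<close>
lemma sum_imbalance_sq_le:
  assumes "finite J" "finite C" "C \<noteq> {}" "\<forall>x\<in>C. \<forall>z\<in>C. agree_on (- J) x z"
  shows "(\<Sum>i\<in>J. (imbalance C i)\<^sup>2)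
           \<le> 4 * (real (card C))\<^sup>2 * (real (card J) * ln 2 - ln (real (card C)))"
  using assms
proof (induction J arbitrary: C rule: finite_induct)
  case empty
  then obtain x where x: "x \<in> C" by blast
  have "z = x" if "z \<in> C" for z
    using empty.prems(3) x that by (simp add: agree_on_def fun_eq_iff)
  with x have "C = {x}" by blast
  thus ?case by simp
next
  case (insert j J C)
  define C0 where "C0 = {x\<in>C. \<not> x j}"
  define C1 where "C1 = {x\<in>C. x j}"
  define s0 where "s0 = real (card C0)"
  define s1 where "s1 = real (card C1)"
  define s where "s = real (card C)"
  define m where "m = real (card J)"
  have fin: "finite C0" "finite C1" using insert.prems(1) unfolding C0_def C1_def by auto
  have "C = C0 \<union> C1" "C0 \<inter> C1 = {}" unfolding C0_def C1_def by auto
  hence s: "s = s0 + s1" unfolding s_def s0_def s1_def using fin by (simp add: card_Un_disjoint)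
  have card_insert: "real (card (insert j J)) = m + 1" using insert.hyps unfolding m_def by simp
  have imb_j: "imbalance C j = s1 - s0"
    using imbalance_eq_card_diff[OF insert.prems(1)] unfolding s0_def s1_def C0_def C1_def by simp
  have sum_insert: "(\<Sum>i\<in>insert j J. (imbalance C i)\<^sup>2) = (s1 - s0)\<^sup>2 + (\<Sum>i\<in>J. (imbalance C i)\<^sup>2)"
    using insert.hyps imb_j by simp
  have agree_J: "\<forall>x\<in>D. \<forall>z\<in>D. agree_on (- J) x z" if "D \<subseteq> C" "\<forall>x\<in>D. \<forall>z\<in>D. x j = z j" for D
  proof (intro ballI)
    fix x z assume xz: "x \<in> D" "z \<in> D"
    show "agree_on (- J) x z" unfolding agree_on_def
    proof
      fix i assume "i \<in> - J"
      show "x i = z i"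
      proof (cases "i = j")
        case False
        with \<open>i \<in> - J\<close> have "i \<in> - insert j J" by simp
        thus ?thesis using insert.prems(3) that(1) xz unfolding agree_on_def by blast
      qed (use that(2) xz in simp)
    qed
  qed
  consider "C0 = {} \<or> C1 = {}" | "C0 \<noteq> {}" "C1 \<noteq> {}" by blast
  thus ?case
  proof cases
    case 1
    hence "\<forall>x\<in>C. \<forall>z\<in>C. x j = z j" unfolding C0_def C1_def by blast
    hence IH: "(\<Sum>i\<in>J. (imbalance C i)\<^sup>2) \<le> 4 * s\<^sup>2 * (m * ln 2 - ln s)"
      using insert.IH[OF insert.prems(1,2)] agree_J unfolding s_def m_def by blast
    have "s0 = 0 \<or> s1 = 0" using 1 fin unfolding s0_def s1_def by auto
    hence "(s1 - s0)\<^sup>2 = s\<^sup>2 * 1" using s by (auto simp: power2_commute)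
    also have "\<dots> \<le> s\<^sup>2 * (4 * ln 2)" using ln2_ge_two_thirds by (intro mult_left_mono) auto
    finally have "(\<Sum>i\<in>insert j J. (imbalance C i)\<^sup>2) \<le> 4 * s\<^sup>2 * ln 2 + 4 * s\<^sup>2 * (m * ln 2 - ln s)"
      using sum_insert IH by linarith
    thus ?thesis unfolding card_insert s_def[symmetric] by (simp add: algebra_simps)
  next
    case 2
    have pos: "s0 > 0" "s1 > 0" using 2 fin unfolding s0_def s1_def by (auto simp: card_gt_0_iff)
    have IH0: "(\<Sum>i\<in>J. (imbalance C0 i)\<^sup>2) \<le> 4 * s0\<^sup>2 * (m * ln 2 - ln s0)"
      using insert.IH[OF fin(1) 2(1)] agree_J[of C0] unfolding s0_def m_def C0_def by auto
    have IH1: "(\<Sum>i\<in>J. (imbalance C1 i)\<^sup>2) \<le> 4 * s1\<^sup>2 * (m * ln 2 - ln s1)"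
      using insert.IH[OF fin(2) 2(2)] agree_J[of C1] unfolding s1_def m_def C1_def by auto
    have "(\<Sum>i\<in>J. (imbalance C i)\<^sup>2) = (\<Sum>i\<in>J. (imbalance C0 i + imbalance C1 i)\<^sup>2)"
      using imbalance_split[OF insert.prems(1), where P="\<lambda>x. \<not> x j"] unfolding C0_def C1_def by simp
    also have "\<dots> \<le> (\<Sum>i\<in>J. (s / s0) * (imbalance C0 i)\<^sup>2 + (s / s1) * (imbalance C1 i)\<^sup>2)"
      unfolding s using pos by (intro sum_mono sq_add_le_weighted) auto
    also have "\<dots> = (s / s0) * (\<Sum>i\<in>J. (imbalance C0 i)\<^sup>2) + (s / s1) * (\<Sum>i\<in>J. (imbalance C1 i)\<^sup>2)"
      by (simp add: sum.distrib sum_distrib_left)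
    also have "\<dots> \<le> (s / s0) * (4 * s0\<^sup>2 * (m * ln 2 - ln s0)) + (s / s1) * (4 * s1\<^sup>2 * (m * ln 2 - ln s1))"
      using IH0 IH1 pos s by (intro add_mono mult_left_mono) auto
    also have "\<dots> = 4 * s * s0 * (m * ln 2 - ln s0) + 4 * s * s1 * (m * ln 2 - ln s1)"
      using pos by (simp add: power2_eq_square)
    finally have J_part: "(\<Sum>i\<in>J. (imbalance C i)\<^sup>2)
        \<le> 4 * s * s0 * (m * ln 2 - ln s0) + 4 * s * s1 * (m * ln 2 - ln s1)" .
    have j_part: "(s1 - s0)\<^sup>2 \<le> 4 * s * (s0 * ln s0 + s1 * ln s1 - s * ln s + s * ln 2)"
      using sq_diff_le_entropy_gain[OF pos] s by simp
    have "4 * s * s0 * (m * ln 2 - ln s0) + 4 * s * s1 * (m * ln 2 - ln s1)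
        + 4 * s * (s0 * ln s0 + s1 * ln s1 - s * ln s + s * ln 2) = 4 * s\<^sup>2 * ((m + 1) * ln 2 - ln s)"
      using s by (simp add: algebra_simps power2_eq_square)
    hence "(\<Sum>i\<in>insert j J. (imbalance C i)\<^sup>2) \<le> 4 * s\<^sup>2 * ((m + 1) * ln 2 - ln s)"
      using sum_insert J_part j_part by linarith
    thus ?thesis unfolding card_insert s_def .
  qed
qed

definition cell :: "(nat \<Rightarrow> bool) set \<Rightarrow> nat set \<Rightarrow> (nat \<Rightarrow> bool) \<Rightarrow> (nat \<Rightarrow> bool) set" where
  "cell X K x = {z\<in>X. agree_on K x z}"

definition coincidences :: "(nat \<Rightarrow> bool) set \<Rightarrow> nat set \<Rightarrow> real" where
  "coincidences X K = (\<Sum>x\<in>X. real (card (cell X K x)))"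

lemma cell_eq: "y \<in> cell X K x \<Longrightarrow> cell X K y = cell X K x"
  unfolding cell_def agree_on_def by auto

lemma self_in_cell: "x \<in> X \<Longrightarrow> x \<in> cell X K x"
  unfolding cell_def agree_on_def by auto

lemma finite_cell: "finite X \<Longrightarrow> finite (cell X K x)"
  unfolding cell_def by auto

lemma card_cell_pos: "finite X \<Longrightarrow> x \<in> X \<Longrightarrow> 0 < real (card (cell X K x))"
  using self_in_cell finite_cell by (metis card_gt_0_iff empty_iff of_nat_0_less_iff)

lemma coincidences_nonneg: "0 \<le> coincidences X K"
  unfolding coincidences_def by (simp add: sum_nonneg)

lemma sum_cell_average:
  assumes "finite X"
  shows "(\<Sum>x\<in>X. F x) = (\<Sum>x\<in>X. (\<Sum>y\<in>cell X K x. F y) / real (card (cell X K x)))"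
proof -
  have "(\<Sum>y\<in>cell X K x. F y) / real (card (cell X K x))
      = (\<Sum>y\<in>X. if agree_on K x y then F y / real (card (cell X K y)) else 0)" for x
  proof -
    have "(\<Sum>y\<in>cell X K x. F y) / real (card (cell X K x))
        = (\<Sum>y\<in>cell X K x. F y / real (card (cell X K y)))"
      by (simp add: sum_divide_distrib cell_eq)
    also have "\<dots> = (\<Sum>y\<in>X. if agree_on K x y then F y / real (card (cell X K y)) else 0)"
      unfolding cell_def using assms by (simp add: sum.inter_filter)
    finally show ?thesis .
  qed
  hence "(\<Sum>x\<in>X. (\<Sum>y\<in>cell X K x. F y) / real (card (cell X K x)))
      = (\<Sum>x\<in>X. \<Sum>y\<in>X. if agree_on K x y then F y / real (card (cell X K y)) else 0)"
    by simp
  also have "\<dots> = (\<Sum>y\<in>X. \<Sum>x\<in>X. if agree_on K x y then F y / real (card (cell X K y)) else 0)"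
    by (rule sum.swap)
  also have "\<dots> = (\<Sum>y\<in>X. F y / real (card (cell X K y)) * real (card (cell X K y)))"
  proof (intro sum.cong refl)
    fix y assume "y \<in> X"
    have "{x\<in>X. agree_on K x y} = cell X K y" unfolding cell_def agree_on_def by auto
    thus "(\<Sum>x\<in>X. if agree_on K x y then F y / real (card (cell X K y)) else 0)
        = F y / real (card (cell X K y)) * real (card (cell X K y))"
      using assms by (simp add: sum.inter_filter[symmetric])
  qed
  also have "\<dots> = (\<Sum>y\<in>X. F y)"
    using card_cell_pos[OF assms] by (intro sum.cong refl) (metis less_irrefl nonzero_divide_eq_eq)
  finally show ?thesis by simp
qed

text \<open>There are at most \<open>2 ^ card K\<close> cells, and the cell of \<open>x\<close> contributes \<open>1\<close> in total.\<close>
lemma sum_inverse_card_cell_le: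
  assumes "finite X" "finite K"
  shows "(\<Sum>x\<in>X. 1 / real (card (cell X K x))) \<le> 2 ^ card K"
proof -
  define r where "r x = {i\<in>K. x i}" for x :: "nat \<Rightarrow> bool"
  have cell_r: "cell X K x = {z\<in>X. r z = r x}" for x
    unfolding cell_def agree_on_def r_def by auto
  have "(\<Sum>x\<in>X. 1 / real (card (cell X K x)))
      = (\<Sum>a\<in>r ` X. \<Sum>x\<in>{x\<in>X. r x = a}. 1 / real (card {z\<in>X. r z = a}))"
    unfolding cell_r using assms(1) by (subst sum.image_gen) (auto intro!: sum.cong)
  also have "\<dots> = (\<Sum>a\<in>r ` X. 1)"
  proof (intro sum.cong refl)
    fix a assume "a \<in> r ` X"
    hence "{x\<in>X. r x = a} \<noteq> {}" by auto
    thus "(\<Sum>x\<in>{x\<in>X. r x = a}. 1 / real (card {z\<in>X. r z = a})) = 1" using assms(1) by simp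
  qed
  also have "\<dots> = real (card (r ` X))" by simp
  also have "\<dots> \<le> real (card (Pow K))"
    using assms(2) by (intro of_nat_mono card_mono) (auto simp: r_def)
  finally show ?thesis using assms(2) by (simp add: card_Pow)
qed

text \<open>Cauchy--Schwarz over the cells.\<close>
lemma card_sq_le_coincidences:
  assumes "finite X" "finite K" "X \<noteq> {}"
  shows "(real (card X))\<^sup>2 \<le> 2 ^ card K * coincidences X K"
proof -
  define c where "c x = real (card (cell X K x))" for x
  define N where "N = (\<Sum>x\<in>X. 1 / c x)"
  define t where "t = real (card X) / N"
  have c: "x \<in> X \<Longrightarrow> c x > 0" for x using card_cell_pos[OF assms(1)] c_def by auto
  have N: "N > 0" unfolding N_def using c assms by (intro sum_pos) auto
  have "2 * t \<le> c x + t\<^sup>2 * (1 / c x)" if "x \<in> X" for x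
  proof -
    have "c x + t\<^sup>2 * (1 / c x) - 2 * t = (c x - t)\<^sup>2 / c x"
      using c[OF that] by (simp add: field_simps power2_eq_square)
    thus ?thesis using c[OF that] by (smt (verit) divide_nonneg_pos zero_le_power2)
  qed
  hence "(\<Sum>x\<in>X. 2 * t) \<le> (\<Sum>x\<in>X. c x + t\<^sup>2 * (1 / c x))" by (rule sum_mono)
  hence "2 * t * real (card X) \<le> coincidences X K + t\<^sup>2 * N"
    unfolding coincidences_def N_def c_def by (simp add: sum.distrib sum_distrib_left mult.commute)
  moreover have "2 * t * real (card X) = 2 * (real (card X))\<^sup>2 / N" "t\<^sup>2 * N = (real (card X))\<^sup>2 / N"
    unfolding t_def using N by (simp_all add: power2_eq_square field_simps)
  ultimately have "(real (card X))\<^sup>2 / N \<le> coincidences X K" by linarith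
  hence "(real (card X))\<^sup>2 \<le> N * coincidences X K"
    using N by (simp add: divide_le_eq mult.commute)
  also have "\<dots> \<le> 2 ^ card K * coincidences X K"
    using sum_inverse_card_cell_le[OF assms(1,2)] coincidences_nonneg
    unfolding N_def c_def by (intro mult_right_mono) auto
  finally show ?thesis .
qed

text \<open>Gibbs' inequality, with the cell count bounded by the previous lemma.\<close>
lemma coincidences_mult_ln_le:
  assumes "finite X" "finite K" "X \<noteq> {}"
  shows "coincidences X K * (ln (real (card X)) - real (card K) * ln 2)
           \<le> (\<Sum>x\<in>X. real (card (cell X K x)) * ln (real (card (cell X K x))))"
proof -
  define S where "S = coincidences X K"
  define N where "N = real (card X)"
  have S_sum: "S = (\<Sum>x\<in>X. real (card (cell X K x)))" unfolding S_def coincidences_def ..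
  have S: "S > 0" unfolding S_sum using card_cell_pos[OF assms(1)] assms by (intro sum_pos) auto
  have N: "N > 0" unfolding N_def using assms by (simp add: card_gt_0_iff)
  have "N\<^sup>2 \<le> 2 ^ card K * S"
    using card_sq_le_coincidences[OF assms] unfolding N_def S_def .
  hence "ln (N\<^sup>2) \<le> ln (2 ^ card K * S)" using N S by simp
  hence "2 * ln N \<le> real (card K) * ln 2 + ln S" using N S by (simp add: ln_mult ln_realpow)
  hence "ln N - real (card K) * ln 2 \<le> ln (S / N)" using N S by (simp add: ln_div)
  hence "S * (ln N - real (card K) * ln 2) \<le> S * ln (S / N)" using S by (intro mult_left_mono) auto
  also have "\<dots> \<le> (\<Sum>x\<in>X. real (card (cell X K x)) * ln (real (card (cell X K x))))"
    using sum_mult_ln_ge[of X "\<lambda>x. real (card (cell X K x))"] assms card_cell_pos[OF assms(1)]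
    unfolding S_sum N_def by simp
  finally show ?thesis unfolding S_def N_def .
qed

lemma two_card_agree_eq:
  assumes "finite C"
  shows "2 * real (card {z\<in>C. z i = x i}) = real (card C) + spin x i * imbalance C i"
proof -
  have "card ({z\<in>C. z i} \<union> {z\<in>C. \<not> z i}) = card {z\<in>C. z i} + card {z\<in>C. \<not> z i}"
    using assms by (intro card_Un_disjoint) auto
  moreover have "{z\<in>C. z i} \<union> {z\<in>C. \<not> z i} = C" by auto
  ultimately have "card C = card {z\<in>C. z i} + card {z\<in>C. \<not> z i}" by simp
  thus ?thesis using imbalance_eq_card_diff[OF assms, of i] by (cases "x i") (simp_all add: spin_def)
qed

lemma coincidences_insert:
  assumes "finite X" "i \<notin> K"
  shows "2 * coincidences X (insert i K)
           = coincidences X K + (\<Sum>x\<in>X. (imbalance (cell X K x) i)\<^sup>2 / real (card (cell X K x)))"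
proof -
  have cell_insert: "cell X (insert i K) x = {z\<in>cell X K x. z i = x i}" for x
    unfolding cell_def agree_on_def by auto
  have "2 * coincidences X (insert i K)
      = (\<Sum>x\<in>X. real (card (cell X K x)) + spin x i * imbalance (cell X K x) i)"
    unfolding coincidences_def sum_distrib_left cell_insert
    using finite_cell[OF assms(1)] by (simp add: two_card_agree_eq)
  also have "\<dots> = coincidences X K + (\<Sum>x\<in>X. spin x i * imbalance (cell X K x) i)"
    unfolding coincidences_def by (simp add: sum.distrib)
  also have "(\<Sum>x\<in>X. spin x i * imbalance (cell X K x) i)
      = (\<Sum>x\<in>X. (\<Sum>y\<in>cell X K x. spin y i * imbalance (cell X K y) i) / real (card (cell X K x)))"
    using assms(1) by (rule sum_cell_average)
  also have "\<dots> = (\<Sum>x\<in>X. (imbalance (cell X K x) i)\<^sup>2 / real (card (cell X K x)))"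
  proof (intro sum.cong refl)
    fix x
    have "(\<Sum>y\<in>cell X K x. spin y i * imbalance (cell X K y) i)
        = (\<Sum>y\<in>cell X K x. spin y i) * imbalance (cell X K x) i"
      by (simp add: cell_eq sum_distrib_right)
    thus "(\<Sum>y\<in>cell X K x. spin y i * imbalance (cell X K y) i) / real (card (cell X K x))
        = (imbalance (cell X K x) i)\<^sup>2 / real (card (cell X K x))"
      by (simp add: imbalance_def power2_eq_square)
  qed
  finally show ?thesis .
qed

lemma sum_coincidences_insert_le:
  assumes I: "finite I" and X: "finite X" "X \<noteq> {}" "\<forall>x\<in>X. \<forall>z\<in>X. agree_on (- I) x z"
    and K: "K \<subseteq> I"
  shows "2 * (\<Sum>i\<in>I - K. coincidences X (insert i K))
           \<le> coincidences X K * (real (card (I - K)) + 4 * (real (card I) * ln 2 - ln (real (card X))))"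
proof -
  define c where "c x = real (card (cell X K x))" for x
  define S where "S = coincidences X K"
  define N where "N = real (card X)"
  define m where "m = real (card (I - K))"
  have c_pos: "x \<in> X \<Longrightarrow> c x > 0" for x using card_cell_pos[OF X(1)] c_def by auto
  have S_def': "S = (\<Sum>x\<in>X. c x)" unfolding S_def coincidences_def c_def ..
  have finK: "finite K" using K I finite_subset by blast
  have card_I: "real (card I) = m + real (card K)"
    unfolding m_def using card_mono[OF I K] finK K by (simp add: card_Diff_subset of_nat_diff)
  have cell_bound: "(\<Sum>i\<in>I - K. (imbalance (cell X K x) i)\<^sup>2) / c x \<le> 4 * c x * (m * ln 2 - ln (c x))"
    if x: "x \<in> X" for x
  proof -
    have "\<forall>z\<in>cell X K x. \<forall>w\<in>cell X K x. agree_on (- (I - K)) z w"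
    proof (intro ballI)
      fix z w assume zw: "z \<in> cell X K x" "w \<in> cell X K x"
      hence "agree_on K z w" "agree_on (- I) z w"
        using X(3) unfolding cell_def agree_on_def by auto
      thus "agree_on (- (I - K)) z w" unfolding agree_on_def by blast
    qed
    hence "(\<Sum>i\<in>I - K. (imbalance (cell X K x) i)\<^sup>2) \<le> 4 * (c x)\<^sup>2 * (m * ln 2 - ln (c x))"
      using sum_imbalance_sq_le[of "I - K" "cell X K x"] I finite_cell[OF X(1)] self_in_cell[OF x]
      unfolding c_def m_def by blast
    thus ?thesis using c_pos[OF x] by (simp add: divide_le_eq power2_eq_square mult.commute mult.left_commute)
  qed
  have "2 * (\<Sum>i\<in>I - K. coincidences X (insert i K))
      = (\<Sum>i\<in>I - K. S + (\<Sum>x\<in>X. (imbalance (cell X K x) i)\<^sup>2 / c x))"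
    unfolding sum_distrib_left S_def c_def using X(1) by (intro sum.cong refl) (simp add: coincidences_insert)
  also have "\<dots> = m * S + (\<Sum>x\<in>X. (\<Sum>i\<in>I - K. (imbalance (cell X K x) i)\<^sup>2) / c x)"
    by (simp add: sum.distrib m_def sum.swap[of _ "I - K"] sum_divide_distrib)
  also have "\<dots> \<le> m * S + (\<Sum>x\<in>X. 4 * c x * (m * ln 2 - ln (c x)))"
    using cell_bound by (intro add_left_mono sum_mono) auto
  also have "\<dots> = m * S + 4 * (m * ln 2 * S - (\<Sum>x\<in>X. c x * ln (c x)))"
    unfolding S_def' by (simp add: algebra_simps sum_subtractf sum_distrib_left sum_distrib_right)
  also have "\<dots> \<le> m * S + 4 * (m * ln 2 * S + S * (real (card K) * ln 2 - ln N))"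
    using coincidences_mult_ln_le[OF X(1) finK X(2)] unfolding S_def[symmetric] N_def c_def
    by (simp add: algebra_simps)
  also have "\<dots> = S * (m + 4 * (real (card I) * ln 2 - ln N))"
    unfolding card_I by (simp add: algebra_simps)
  finally show ?thesis unfolding S_def m_def N_def .
qed

definition ksubsets :: "'a set \<Rightarrow> nat \<Rightarrow> 'a set set" where
  "ksubsets I j = {K. K \<subseteq> I \<and> card K = j}"

lemma finite_ksubsets: "finite I \<Longrightarrow> finite (ksubsets I j)"
  unfolding ksubsets_def by (rule finite_subset[of _ "Pow I"]) auto

lemma card_ksubsets: "finite I \<Longrightarrow> card (ksubsets I j) = card I choose j"
  unfolding ksubsets_def by (rule n_subsets)

lemma ksubsets_0: "finite I \<Longrightarrow> ksubsets I 0 = {{}}"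
  unfolding ksubsets_def using finite_subset by fastforce

text \<open>Double counting of the pairs \<open>(K, i)\<close> with \<open>i \<notin> K\<close>, through the bijection with pairs
  \<open>(K', i)\<close> with \<open>i \<in> K'\<close>, \<open>K' = insert i K\<close>.\<close>
lemma sum_ksubsets_insert:
  fixes f :: "'a set \<Rightarrow> real"
  assumes I: "finite I"
  shows "(\<Sum>K\<in>ksubsets I j. \<Sum>i\<in>I - K. f (insert i K)) = real (Suc j) * (\<Sum>K\<in>ksubsets I (Suc j). f K)"
proof -
  have fin: "K \<subseteq> I \<Longrightarrow> finite K" for K
    using I finite_subset by blast
  have "(\<Sum>K\<in>ksubsets I j. \<Sum>i\<in>I - K. f (insert i K)) = (\<Sum>(K, i)\<in>(SIGMA K:ksubsets I j. I - K). f (insert i K))"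
    using finite_ksubsets[OF I] I by (intro sum.Sigma) auto
  also have "\<dots> = (\<Sum>(K, i)\<in>(SIGMA K:ksubsets I (Suc j). K). f K)"
    by (rule sum.reindex_bij_witness[where i="\<lambda>(K, i). (K - {i}, i)" and j="\<lambda>(K, i). (insert i K, i)"])
       (auto simp: ksubsets_def fin card_insert_if)
  also have "\<dots> = (\<Sum>K\<in>ksubsets I (Suc j). \<Sum>i\<in>K. f K)"
    using finite_ksubsets[OF I] fin by (intro sum.Sigma[symmetric]) (auto simp: ksubsets_def)
  also have "\<dots> = real (Suc j) * (\<Sum>K\<in>ksubsets I (Suc j). f K)"
    by (simp add: ksubsets_def sum_distrib_left)
  finally show ?thesis .
qed

definition scaled_coincidences :: "(nat \<Rightarrow> bool) set \<Rightarrow> nat set \<Rightarrow> nat \<Rightarrow> real" where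
  "scaled_coincidences X I j = 2 ^ j * (\<Sum>K\<in>ksubsets I j. coincidences X K) / real (card I choose j)"

lemma scaled_coincidences_nonneg: "0 \<le> scaled_coincidences X I j"
  unfolding scaled_coincidences_def by (simp add: sum_nonneg coincidences_nonneg)

lemma scaled_coincidences_0:
  assumes "finite I" "finite X"
  shows "scaled_coincidences X I 0 = (real (card X))\<^sup>2"
proof -
  have "cell X {} x = X" for x unfolding cell_def agree_on_def by auto
  thus ?thesis using assms
    by (simp add: scaled_coincidences_def ksubsets_0 coincidences_def power2_eq_square)
qed

lemma scaled_coincidences_Suc_le:
  assumes I: "finite I" and X: "finite X" "X \<noteq> {}" "\<forall>x\<in>X. \<forall>z\<in>X. agree_on (- I) x z"
    and L: "real (card I) * ln 2 - ln (real (card X)) \<le> L" and j: "j < card I"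
  shows "scaled_coincidences X I (Suc j) \<le> scaled_coincidences X I j * (1 + 4 * L / real (card I - j))"
proof -
  define A where "A l = (\<Sum>K\<in>ksubsets I l. coincidences X K)" for l
  define N where "N = card I"
  have C: "real (N choose j) > 0" "real (N choose Suc j) > 0" unfolding N_def using j by simp_all
  have Nj: "real (N - j) > 0" unfolding N_def using j by simp
  have binom: "real (Suc j) * real (N choose Suc j) = real (N - j) * real (N choose j)"
    using binomial_absorption[of j N] binomial_absorb_comp[of N j] by (metis of_nat_mult)
  have "2 * real (Suc j) * A (Suc j) = 2 * (\<Sum>K\<in>ksubsets I j. \<Sum>i\<in>I - K. coincidences X (insert i K))"
    unfolding A_def using sum_ksubsets_insert[OF I, of "coincidences X" j] by simp
  also have "\<dots> = (\<Sum>K\<in>ksubsets I j. 2 * (\<Sum>i\<in>I - K. coincidences X (insert i K)))"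
    by (rule sum_distrib_left)
  also have "\<dots> \<le> (\<Sum>K\<in>ksubsets I j. coincidences X K * (real (N - j) + 4 * L))"
  proof (intro sum_mono)
    fix K assume "K \<in> ksubsets I j"
    hence K: "K \<subseteq> I" "card (I - K) = N - j"
      unfolding ksubsets_def N_def using I by (auto simp: card_Diff_subset finite_subset)
    have "2 * (\<Sum>i\<in>I - K. coincidences X (insert i K))
        \<le> coincidences X K * (real (card (I - K)) + 4 * (real (card I) * ln 2 - ln (real (card X))))"
      by (rule sum_coincidences_insert_le[OF I X K(1)])
    also have "\<dots> \<le> coincidences X K * (real (N - j) + 4 * L)"
      unfolding K(2) using L coincidences_nonneg by (intro mult_left_mono) auto
    finally show "2 * (\<Sum>i\<in>I - K. coincidences X (insert i K)) \<le> coincidences X K * (real (N - j) + 4 * L)" .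
  qed
  also have "\<dots> = A j * (real (N - j) + 4 * L)"
    unfolding A_def by (simp add: sum_distrib_right)
  finally have rec: "2 * real (Suc j) * A (Suc j) \<le> A j * (real (N - j) + 4 * L)" .
  have "scaled_coincidences X I (Suc j) = 2 ^ j * (2 * real (Suc j) * A (Suc j)) / (real (N - j) * real (N choose j))"
    unfolding scaled_coincidences_def A_def N_def[symmetric] binom[symmetric] using C by (simp add: field_simps del: of_nat_Suc)
  also have "\<dots> \<le> 2 ^ j * (A j * (real (N - j) + 4 * L)) / (real (N - j) * real (N choose j))"
    using rec C Nj by (intro divide_right_mono mult_left_mono) auto
  also have "\<dots> = scaled_coincidences X I j * (1 + 4 * L / real (N - j))"
    unfolding scaled_coincidences_def A_def N_def[symmetric] using C Nj by (simp add: field_simps)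
  finally show ?thesis unfolding N_def .
qed

lemma scaled_coincidences_le_exp:
  assumes I: "finite I" and X: "finite X" "X \<noteq> {}" "\<forall>x\<in>X. \<forall>z\<in>X. agree_on (- I) x z"
    and L: "real (card I) * ln 2 - ln (real (card X)) \<le> L" "0 \<le> L" and k: "k \<le> card I"
  shows "scaled_coincidences X I k \<le> (real (card X))\<^sup>2 * exp (real k * (4 * L / real (card I - k + 1)))"
proof -
  define a where "a = 4 * L / real (card I - k + 1)"
  have a: "a \<ge> 0" unfolding a_def using L by simp
  have "scaled_coincidences X I j \<le> (real (card X))\<^sup>2 * (1 + a) ^ j" if "j \<le> k" for j
    using that
  proof (induction j)
    case 0
    thus ?case using scaled_coincidences_0[OF I X(1)] by simp
  next
    case (Suc j)
    have "4 * L / real (card I - j) \<le> a"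
      unfolding a_def using Suc.prems k L(2) by (intro divide_left_mono) auto
    have "scaled_coincidences X I (Suc j) \<le> scaled_coincidences X I j * (1 + 4 * L / real (card I - j))"
      using Suc.prems k by (intro scaled_coincidences_Suc_le[OF I X L(1)]) auto
    also have "\<dots> \<le> scaled_coincidences X I j * (1 + a)"
      using \<open>4 * L / real (card I - j) \<le> a\<close> scaled_coincidences_nonneg by (intro mult_left_mono) auto
    also have "\<dots> \<le> (real (card X))\<^sup>2 * (1 + a) ^ j * (1 + a)"
      using Suc a by (intro mult_right_mono) auto
    finally show ?case by (simp add: ac_simps)
  qed
  hence "scaled_coincidences X I k \<le> (real (card X))\<^sup>2 * (1 + a) ^ k" by simp
  also have "\<dots> \<le> (real (card X))\<^sup>2 * exp a ^ k"
    using a by (intro mult_left_mono power_mono) (auto simp: exp_ge_add_one_self add.commute)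
  finally show ?thesis unfolding a_def exp_of_nat_mult .
qed

lemma card_agree_on_compl:
  assumes "finite K"
  shows "card {y. agree_on (- K) z y} = 2 ^ card K"
proof -
  have "bij_betw (\<lambda>y. {i\<in>K. y i}) {y. agree_on (- K) z y} (Pow K)"
    by (rule bij_betwI[where g="\<lambda>A. override_on z (\<lambda>i. i \<in> A) K"])
       (auto simp: agree_on_def override_on_def fun_eq_iff)
  thus ?thesis using assms by (simp add: bij_betw_same_card card_Pow)
qed

lemma cube_eq_agree_on: "cube n = {y. agree_on (- {..<n}) (\<lambda>_. False) y}"
  unfolding cube_def agree_on_def by auto

lemma card_cube: "card (cube n) = 2 ^ n"
  using card_agree_on_compl[of "{..<n}" "\<lambda>_. False"] unfolding cube_eq_agree_on by simp

lemma finite_cube: "finite (cube n)"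
  using card_cube by (metis card.infinite power_not_zero zero_neq_numeral)

lemma cube_nonempty: "cube n \<noteq> {}"
  using card_cube by (metis card.empty power_not_zero zero_neq_numeral)

lemma agree_on_compl_cube: "x \<in> cube n \<Longrightarrow> z \<in> cube n \<Longrightarrow> agree_on (- {..<n}) x z"
  unfolding cube_def agree_on_def by auto

text \<open>The \<open>y\<close> with \<open>override_on y x K \<in> X\<close> are those agreeing off \<open>K\<close> with some point of the cell of \<open>x\<close>.\<close>
lemma card_override_on_preimage:
  assumes K: "K \<subseteq> {..<n}" and X: "X \<subseteq> cube n"
  shows "card {y\<in>cube n. override_on y x K \<in> X} = 2 ^ card K * card (cell X K x)"
proof -
  have finK: "finite K" using K finite_subset by blast
  have finX: "finite X" using X finite_cube finite_subset by blast
  define F where "F z = {y. agree_on (- K) z y}" for z :: "nat \<Rightarrow> bool"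
  have "{y\<in>cube n. override_on y x K \<in> X} = (\<Union>z\<in>cell X K x. F z)"
  proof (intro equalityI subsetI)
    fix y assume "y \<in> {y\<in>cube n. override_on y x K \<in> X}"
    moreover have "y \<in> F (override_on y x K)" unfolding F_def agree_on_def override_on_def by auto
    ultimately show "y \<in> (\<Union>z\<in>cell X K x. F z)"
      unfolding cell_def agree_on_def override_on_def by auto
  next
    fix y assume "y \<in> (\<Union>z\<in>cell X K x. F z)"
    then obtain z where z: "z \<in> X" "agree_on K x z" "agree_on (- K) z y"
      unfolding cell_def F_def by blast
    hence "override_on y x K = z" unfolding agree_on_def override_on_def by (auto simp: fun_eq_iff)
    moreover have "y \<in> cube n" using z X K unfolding cube_def agree_on_def by force
    ultimately show "y \<in> {y\<in>cube n. override_on y x K \<in> X}" using z by simp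
  qed
  moreover have "card (\<Union>z\<in>cell X K x. F z) = (\<Sum>z\<in>cell X K x. card (F z))"
  proof (rule card_UN_disjoint)
    show "finite (cell X K x)" using finite_cell[OF finX] .
    show "\<forall>z\<in>cell X K x. finite (F z)"
      unfolding F_def using card_agree_on_compl[OF finK] by (metis card.infinite power_not_zero zero_neq_numeral)
    show "\<forall>z\<in>cell X K x. \<forall>w\<in>cell X K x. z \<noteq> w \<longrightarrow> F z \<inter> F w = {}"
      unfolding cell_def F_def agree_on_def by (auto simp: fun_eq_iff)
  qed
  ultimately show ?thesis unfolding F_def using card_agree_on_compl[OF finK] by simp
qed

lemma measure_pmf_prob_bind:
  "measure_pmf.prob (bind_pmf M f) A = (\<integral>x. measure_pmf.prob (f x) A \<partial>M)"
  unfolding measure_pmf_bind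
  by (subst measure_pmf.measure_bind[where N="count_space UNIV"])
     (auto simp: measure_subprob intro!: measurable_pmf_measure1)

lemma prob_T:
  assumes X: "X \<subseteq> cube n" and k: "k \<le> n"
  shows "measure_pmf.prob (T n k x) X
           = 2 ^ k * (\<Sum>K\<in>ksubsets {..<n} k. real (card (cell X K x))) / (2 ^ n * real (n choose k))"
proof -
  have card: "card (ksubsets {..<n} k) = n choose k" by (simp add: card_ksubsets)
  hence ne: "ksubsets {..<n} k \<noteq> {}" using k by (metis card.empty zero_less_binomial_iff not_less less_irrefl)
  have "T n k x = pmf_of_set (ksubsets {..<n} k) \<bind> (\<lambda>K. map_pmf (\<lambda>y. override_on y x K) (pmf_of_set (cube n)))"
    unfolding T_def ksubsets_def map_pmf_def override_on_def ..
  moreover have "measure_pmf.prob (map_pmf (\<lambda>y. override_on y x K) (pmf_of_set (cube n))) X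
      = 2 ^ k * real (card (cell X K x)) / 2 ^ n" if "K \<in> ksubsets {..<n} k" for K
  proof -
    have "cube n \<inter> (\<lambda>y. override_on y x K) -` X = {y\<in>cube n. override_on y x K \<in> X}" by auto
    thus ?thesis using that X card_override_on_preimage[of K n X x] finite_cube cube_nonempty
      by (simp add: measure_pmf_of_set card_cube ksubsets_def)
  qed
  ultimately show ?thesis
    using finite_ksubsets[of "{..<n}" k] ne
    by (simp add: measure_pmf_prob_bind integral_pmf_of_set card sum_divide_distrib sum_distrib_left
                  del: measure_map_pmf)
qed

lemma prob_T_average:
  assumes X: "X \<subseteq> cube n" "X \<noteq> {}" and k: "k \<le> n"
  shows "measure_pmf.prob (pmf_of_set X \<bind> T n k) X
           = scaled_coincidences X {..<n} k / (2 ^ n * real (card X))"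
proof -
  have finX: "finite X" using X finite_cube finite_subset by blast
  have "measure_pmf.prob (pmf_of_set X \<bind> T n k) X = (\<Sum>x\<in>X. measure_pmf.prob (T n k x) X) / real (card X)"
    using finX X(2) by (simp add: measure_pmf_prob_bind integral_pmf_of_set)
  also have "\<dots> = 2 ^ k * (\<Sum>K\<in>ksubsets {..<n} k. coincidences X K) / (2 ^ n * real (n choose k)) / real (card X)"
    unfolding prob_T[OF X(1) k] coincidences_def
    by (simp add: sum_divide_distrib[symmetric] sum_distrib_left[symmetric] sum.swap[of _ X])
  finally show ?thesis unfolding scaled_coincidences_def by simp
qed

lemma prob_T_le:
  assumes X: "X \<subseteq> cube n" "X \<noteq> {}" and k: "k \<le> n"
  shows "measure_pmf.prob (pmf_of_set X \<bind> T n k) X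
           \<le> mu n X * exp (real k * (4 * - ln (mu n X) / real (n - k + 1)))"
proof -
  have finX: "finite X" using X finite_cube finite_subset by blast
  have cX: "real (card X) > 0" using finX X(2) by (simp add: card_gt_0_iff)
  have "card X \<le> 2 ^ n" using card_mono[OF finite_cube X(1)] by (simp add: card_cube)
  hence "mu n X \<le> 1" unfolding mu_def by simp
  moreover have "mu n X > 0" unfolding mu_def using cX by simp
  ultimately have L: "0 \<le> - ln (mu n X)" by simp
  have L_eq: "real (card {..<n}) * ln 2 - ln (real (card X)) = - ln (mu n X)"
    unfolding mu_def using cX by (simp add: ln_div ln_realpow)
  have "\<forall>x\<in>X. \<forall>z\<in>X. agree_on (- {..<n}) x z" using X(1) agree_on_compl_cube by blast
  from scaled_coincidences_le_exp[OF finite_lessThan finX X(2) this L_eq[THEN eq_refl] L, of k]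
  have "scaled_coincidences X {..<n} k \<le> (real (card X))\<^sup>2 * exp (real k * (4 * - ln (mu n X) / real (n - k + 1)))"
    using k by simp
  thus ?thesis
    unfolding prob_T_average[OF X k] using cX
    by (simp add: divide_le_eq mu_def power2_eq_square field_simps)
qed

lemma exponent_eventually_small:
  fixes k :: "nat \<Rightarrow> nat" and h :: "nat \<Rightarrow> real"
  assumes k_log: "(\<lambda>n. real (k n)) \<in> O(\<lambda>n. ln (real n))"
    and h_small: "h \<in> o(\<lambda>n. real n / (ln (real n))\<^sup>2)"
    and \<epsilon>: "\<epsilon> > 0"
  shows "eventually (\<lambda>n. k n \<le> n \<and> real (k n) * (4 * max (h n) 0 / real (n - k n + 1)) < \<epsilon>) at_top"
proof -
  obtain c where c: "c > 0" "eventually (\<lambda>n. norm (real (k n)) \<le> c * norm (ln (real n))) at_top"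
    using landau_o.bigE[OF k_log] by blast
  define \<delta> where "\<delta> = \<epsilon> / (16 * c)"
  have \<delta>: "\<delta> > 0" unfolding \<delta>_def using \<epsilon> c by simp
  have ev_h: "eventually (\<lambda>n. norm (h n) \<le> \<delta> * norm (real n / (ln (real n))\<^sup>2)) at_top"
    using landau_o.smallD[OF h_small \<delta>] .
  have "(\<lambda>n::nat. ln (real n)) \<in> o(\<lambda>n. real n)" by real_asymp
  hence ev_ln: "eventually (\<lambda>n. norm (ln (real n)) \<le> 1 / (2 * c) * norm (real n)) at_top"
    using c by (intro landau_o.smallD) auto
  have ev_1: "eventually (\<lambda>n::nat. 1 \<le> ln (real n)) at_top" by real_asymp
  show ?thesis using c(2) ev_h ev_ln ev_1
  proof eventually_elim
    case (elim n)
    define l where "l = ln (real n)"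
    define H where "H = max (h n) 0"
    have l: "1 \<le> l" using elim(4) unfolding l_def .
    hence n: "real n > 0" unfolding l_def by (metis ln_0 of_nat_0_less_iff gr0I not_one_le_zero of_nat_0)
    have k: "real (k n) \<le> c * l" using elim(1) l unfolding l_def by simp
    have "c * l \<le> real n / 2" using elim(3) l c unfolding l_def by (simp add: field_simps)
    hence kn: "k n \<le> n" "real n / 2 \<le> real (n - k n + 1)" using k by (simp_all add: of_nat_diff)
    have H: "0 \<le> H" "H \<le> \<delta> * (real n / l\<^sup>2)"
      using elim(2) l n \<delta> unfolding H_def l_def by (auto simp: abs_le_iff)
    have "real (k n) * (4 * H / real (n - k n + 1)) \<le> (c * l) * (4 * H / (real n / 2))"
      using k H kn n c l by (intro mult_mono divide_left_mono) auto
    also have "\<dots> \<le> (c * l) * (4 * (\<delta> * (real n / l\<^sup>2)) / (real n / 2))"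
      using H n c l by (intro divide_right_mono mult_left_mono) auto
    also have "\<dots> = 8 * c * \<delta> / l" using n l by (simp add: field_simps power2_eq_square)
    also have "\<dots> \<le> 8 * c * \<delta>" using l c \<delta> by (simp add: divide_le_eq)
    also have "\<dots> < \<epsilon>" unfolding \<delta>_def using c \<epsilon> by simp
    finally show ?case using kn unfolding H_def by simp
  qed
qed

theorem claimD:
  fixes k :: "nat \<Rightarrow> nat" and h :: "nat \<Rightarrow> real"
  assumes k_pos: "\<forall>n. 1 \<le> k n"
    and k_log: "(\<lambda>n. real (k n)) \<in> O(\<lambda>n. ln (real n))"
    and h_small: "h \<in> o(\<lambda>n. real n / (ln (real n))\<^sup>2)"
  shows "\<forall>\<eta>>0. \<exists>n0. \<forall>n\<ge>n0. \<forall>X. X \<subseteq> cube n \<and> mu n X \<ge> exp (- h n) \<longrightarrow>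
           measure_pmf.prob (pmf_of_set X \<bind> T n (k n)) X < (1 + \<eta>) * mu n X"
proof (intro allI impI)
  fix \<eta> :: real assume \<eta>: "\<eta> > 0"
  have "ln (1 + \<eta>) > 0" using \<eta> by simp
  from exponent_eventually_small[OF k_log h_small this] obtain n0 where n0:
    "\<And>n. n \<ge> n0 \<Longrightarrow> k n \<le> n \<and> real (k n) * (4 * max (h n) 0 / real (n - k n + 1)) < ln (1 + \<eta>)"
    unfolding eventually_at_top_linorder by blast
  show "\<exists>n0. \<forall>n\<ge>n0. \<forall>X. X \<subseteq> cube n \<and> mu n X \<ge> exp (- h n) \<longrightarrow>
          measure_pmf.prob (pmf_of_set X \<bind> T n (k n)) X < (1 + \<eta>) * mu n X"
  proof (intro exI allI impI, elim conjE)
    fix n X assume n: "n0 \<le> n" and X: "X \<subseteq> cube n" "exp (- h n) \<le> mu n X"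
    have \<mu>: "mu n X > 0" using X(2) by (meson exp_gt_zero less_le_trans)
    hence "X \<noteq> {}" unfolding mu_def by auto
    have "- ln (mu n X) \<le> max (h n) 0"
      using ln_le_cancel_iff[of "exp (- h n)" "mu n X"] X(2) \<mu> by simp
    hence "real (k n) * (4 * - ln (mu n X) / real (n - k n + 1))
        \<le> real (k n) * (4 * max (h n) 0 / real (n - k n + 1))"
      by (intro mult_left_mono divide_right_mono) auto
    also have "\<dots> < ln (1 + \<eta>)" using n0[OF n] by blast
    finally have "exp (real (k n) * (4 * - ln (mu n X) / real (n - k n + 1))) < 1 + \<eta>"
      using \<eta> by (metis exp_less_cancel_iff exp_ln add_pos_pos zero_less_one)
    hence "mu n X * exp (real (k n) * (4 * - ln (mu n X) / real (n - k n + 1))) < mu n X * (1 + \<eta>)"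
      using \<mu> by simp
    with prob_T_le[OF X(1) \<open>X \<noteq> {}\<close> conjunct1[OF n0[OF n]]]
    show "measure_pmf.prob (pmf_of_set X \<bind> T n (k n)) X < (1 + \<eta>) * mu n X"
      by (simp add: mult.commute)
  qed
qed

end
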